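(* Let $I$ be an inverse semigroup [respectively, inverse monoid] generated as a semigroup [monoid] by a (not necessarily finite) set $\Sigma$, and let $L$ be the idempotent problem of $I$ with respect to $\Sigma$. Then the map sending each element $s\in I$ to the $\equiv_L$-class of any word over $\Sigma$ representing $s$ is a well-defined, surjective, idempotent-pure morphism from $I$ onto the syntactic semigroup $M^+(L)$ [respectively, onto the syntactic monoid $M(L)$]. Moreover, its kernel is the greatest idempotent-pure congruence on $I$. *)

theory Defs
  imports Main
begin

definition idem :: "('a \<Rightarrow> 'a \<Rightarrow> 'a) \<Rightarrow> 'a \<Rightarrow> bool" where
  "idem mult x \<longleftrightarrow> mult x x = x"

definition semigroup_on :: "'a set \<Rightarrow> ('a \<Rightarrow> 'a \<Rightarrow> 'a) \<Rightarrow> bool" where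
  "semigroup_on S mult \<longleftrightarrow>
     (\<forall>x\<in>S. \<forall>y\<in>S. mult x y \<in> S) \<and>
     (\<forall>x\<in>S. \<forall>y\<in>S. \<forall>z\<in>S. mult (mult x y) z = mult x (mult y z))"

definition inverse_semigroup :: "'a set \<Rightarrow> ('a \<Rightarrow> 'a \<Rightarrow> 'a) \<Rightarrow> bool" where
  "inverse_semigroup S mult \<longleftrightarrow> semigroup_on S mult \<and>
     (\<forall>x\<in>S. \<exists>!y. y \<in> S \<and> mult (mult x y) x = x \<and> mult (mult y x) y = y)"

definition inverse_monoid :: "'a set \<Rightarrow> ('a \<Rightarrow> 'a \<Rightarrow> 'a) \<Rightarrow> 'a \<Rightarrow> bool" where
  "inverse_monoid S mult one \<longleftrightarrow> inverse_semigroup S mult \<and> one \<in> S \<and>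
     (\<forall>x\<in>S. mult one x = x \<and> mult x one = x)"

fun evalw :: "('a \<Rightarrow> 'a \<Rightarrow> 'a) \<Rightarrow> 'a list \<Rightarrow> 'a" where
  "evalw mult [x] = x"
| "evalw mult (x # y # w) = mult x (evalw mult (y # w))"
| "evalw mult [] = undefined"

definition evalm :: "('a \<Rightarrow> 'a \<Rightarrow> 'a) \<Rightarrow> 'a \<Rightarrow> 'a list \<Rightarrow> 'a" where
  "evalm mult one w = foldr mult w one"

definition words_ne :: "'b set \<Rightarrow> 'b list set" where
  "words_ne \<Sigma> = {w. w \<noteq> [] \<and> set w \<subseteq> \<Sigma>}"

definition words :: "'b set \<Rightarrow> 'b list set" where
  "words \<Sigma> = {w. set w \<subseteq> \<Sigma>}"

definition idempotent_problem ::
    "'b list set \<Rightarrow> ('b list \<Rightarrow> 'a) \<Rightarrow> ('a \<Rightarrow> 'a \<Rightarrow> 'a) \<Rightarrow> 'b list set" where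
  "idempotent_problem W ev mult = {w \<in> W. idem mult (ev w)}"

definition syn_equiv :: "'b set \<Rightarrow> 'b list set \<Rightarrow> 'b list \<Rightarrow> 'b list \<Rightarrow> bool" where
  "syn_equiv \<Sigma> L u v \<longleftrightarrow>
     (\<forall>x y. set x \<subseteq> \<Sigma> \<longrightarrow> set y \<subseteq> \<Sigma> \<longrightarrow> (x @ u @ y \<in> L \<longleftrightarrow> x @ v @ y \<in> L))"

definition syn_rel :: "'b list set \<Rightarrow> 'b set \<Rightarrow> 'b list set \<Rightarrow> ('b list \<times> 'b list) set" where
  "syn_rel W \<Sigma> L = {(u, v). u \<in> W \<and> v \<in> W \<and> syn_equiv \<Sigma> L u v}"

text \<open>Syntactic semigroup/monoid: carrier W // syn_rel W \<Sigma> L, product [u][v] = [uv].\<close>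
definition syn_mult ::
    "'b list set \<Rightarrow> 'b set \<Rightarrow> 'b list set \<Rightarrow> 'b list set \<Rightarrow> 'b list set \<Rightarrow> 'b list set" where
  "syn_mult W \<Sigma> L C D = syn_rel W \<Sigma> L `` {(SOME u. u \<in> C) @ (SOME v. v \<in> D)}"

definition canon_map ::
    "'b list set \<Rightarrow> ('b list \<Rightarrow> 'a) \<Rightarrow> 'b set \<Rightarrow> 'b list set \<Rightarrow> 'a \<Rightarrow> 'b list set" where
  "canon_map W ev \<Sigma> L s = syn_rel W \<Sigma> L `` {SOME w. w \<in> W \<and> ev w = s}"

definition congruence_on :: "'a set \<Rightarrow> ('a \<Rightarrow> 'a \<Rightarrow> 'a) \<Rightarrow> ('a \<times> 'a) set \<Rightarrow> bool" where
  "congruence_on S mult \<rho> \<longleftrightarrow> equiv S \<rho> \<and>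
     (\<forall>s t u. (s, t) \<in> \<rho> \<longrightarrow> u \<in> S \<longrightarrow>
        (mult u s, mult u t) \<in> \<rho> \<and> (mult s u, mult t u) \<in> \<rho>)"

definition idempotent_pure_rel :: "('a \<Rightarrow> 'a \<Rightarrow> 'a) \<Rightarrow> ('a \<times> 'a) set \<Rightarrow> bool" where
  "idempotent_pure_rel mult \<rho> \<longleftrightarrow> (\<forall>e s. (e, s) \<in> \<rho> \<longrightarrow> idem mult e \<longrightarrow> idem mult s)"

definition greatest_idpure_congruence :: "'a set \<Rightarrow> ('a \<Rightarrow> 'a \<Rightarrow> 'a) \<Rightarrow> ('a \<times> 'a) set \<Rightarrow> bool" where
  "greatest_idpure_congruence S mult \<rho> \<longleftrightarrow>
     congruence_on S mult \<rho> \<and> idempotent_pure_rel mult \<rho> \<and>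
     (\<forall>\<sigma>. congruence_on S mult \<sigma> \<and> idempotent_pure_rel mult \<sigma> \<longrightarrow> \<sigma> \<subseteq> \<rho>)"

definition canonical_morphism_props ::
    "'a set \<Rightarrow> ('a \<Rightarrow> 'a \<Rightarrow> 'a) \<Rightarrow> 'b set \<Rightarrow> 'b list set \<Rightarrow> ('b list \<Rightarrow> 'a) \<Rightarrow> bool" where
  "canonical_morphism_props S mult \<Sigma> W ev \<longleftrightarrow>
    (let L = idempotent_problem W ev mult;
         R = syn_rel W \<Sigma> L;
         \<phi> = canon_map W ev \<Sigma> L in
      \<comment> \<open>well-defined: words representing the same element are syntactically equivalent\<close>
      (\<forall>u\<in>W. \<forall>v\<in>W. ev u = ev v \<longrightarrow> (u, v) \<in> R) \<and>
      (\<forall>w\<in>W. \<phi> (ev w) = R `` {w}) \<and>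
      \<comment> \<open>maps S onto the syntactic semigroup/monoid\<close>
      \<phi> ` S = W // R \<and>
      \<comment> \<open>morphism\<close>
      (\<forall>s\<in>S. \<forall>t\<in>S. \<phi> (mult s t) = syn_mult W \<Sigma> L (\<phi> s) (\<phi> t)) \<and>
      \<comment> \<open>idempotent-pure\<close>
      (\<forall>s\<in>S. syn_mult W \<Sigma> L (\<phi> s) (\<phi> s) = \<phi> s \<longrightarrow> idem mult s) \<and>
      \<comment> \<open>kernel is the greatest idempotent-pure congruence\<close>
      greatest_idpure_congruence S mult {(s, t). s \<in> S \<and> t \<in> S \<and> \<phi> s = \<phi> t})"

end

theory Submission
  imports Defs
begin

text \<open>Through evaluation, the syntactic congruence of the idempotent problem on words becomes
  the syntactic congruence of the set E of idempotents inside S: s and t are identified iff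
  x s y \<in> E \<longleftrightarrow> x t y \<in> E for all x, y in S with an identity adjoined. Hence the canonical map
  is the quotient of S by that congruence, which contains every idempotent-pure congruence, since
  such a congruence is compatible with contexts and preserves E in both directions. The map is
  idempotent-pure because in an inverse semigroup s s \<equiv> s already forces s \<in> E: with t the
  inverse of s, the context t _ t sends s s to the idempotent (ts)(st) and s to t, so t is
  idempotent, and then s = t by uniqueness of inverses.\<close>

lemma semigroup_on_closed: "semigroup_on S mult \<Longrightarrow> x \<in> S \<Longrightarrow> y \<in> S \<Longrightarrow> mult x y \<in> S"
  by (simp add: semigroup_on_def)

lemma semigroup_on_assoc:
  "semigroup_on S mult \<Longrightarrow> x \<in> S \<Longrightarrow> y \<in> S \<Longrightarrow> z \<in> S \<Longrightarrow> mult (mult x y) z = mult x (mult y z)"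
  by (simp add: semigroup_on_def)

lemma inverse_semigroup_semigroup_on: "inverse_semigroup S mult \<Longrightarrow> semigroup_on S mult"
  by (simp add: inverse_semigroup_def)

definition is_inverse :: "('a \<Rightarrow> 'a \<Rightarrow> 'a) \<Rightarrow> 'a \<Rightarrow> 'a \<Rightarrow> bool" where
  "is_inverse mult x y \<longleftrightarrow> mult (mult x y) x = x \<and> mult (mult y x) y = y"

lemma is_inverse_sym: "is_inverse mult x y \<Longrightarrow> is_inverse mult y x"
  by (simp add: is_inverse_def)

lemma idem_is_inverse_self: "idem mult e \<Longrightarrow> is_inverse mult e e"
  by (simp add: is_inverse_def idem_def)

lemma is_inverse_idem_mult:
  assumes "semigroup_on S mult" "x \<in> S" "y \<in> S" "is_inverse mult x y"
  shows "idem mult (mult x y)"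
  using assms by (simp add: is_inverse_def idem_def semigroup_on_assoc semigroup_on_closed)

lemma inverse_semigroup_inverse_exists:
  "inverse_semigroup S mult \<Longrightarrow> x \<in> S \<Longrightarrow> \<exists>y\<in>S. is_inverse mult x y"
  unfolding inverse_semigroup_def is_inverse_def by blast

lemma inverse_semigroup_inverse_unique:
  "inverse_semigroup S mult \<Longrightarrow> x \<in> S \<Longrightarrow> y \<in> S \<Longrightarrow> y' \<in> S \<Longrightarrow>
    is_inverse mult x y \<Longrightarrow> is_inverse mult x y' \<Longrightarrow> y = y'"
  unfolding inverse_semigroup_def is_inverse_def by blast

lemma inverse_semigroup_inverse_of_idem:
  assumes "inverse_semigroup S mult" "e \<in> S" "x \<in> S" "idem mult e" "is_inverse mult x e"
  shows "x = e"
  using inverse_semigroup_inverse_unique[OF assms(1,2,3,2)] assms(4,5)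
  by (simp add: is_inverse_sym idem_is_inverse_self)

text \<open>If x is the inverse of ef, then so is fxe, hence x = fxe is
  idempotent, and an element whose inverse is idempotent equals that inverse.\<close>
lemma inverse_semigroup_idem_mult:
  assumes inv: "inverse_semigroup S mult"
    and e: "e \<in> S" "idem mult e" and f: "f \<in> S" "idem mult f"
  shows "idem mult (mult e f)"
proof -
  have sg: "semigroup_on S mult" using inv by (rule inverse_semigroup_semigroup_on)
  note cl = semigroup_on_closed[OF sg] and as = semigroup_on_assoc[OF sg]
  have ef: "mult e f \<in> S" using e f cl by blast
  obtain x where x: "x \<in> S" "is_inverse mult (mult e f) x"
    using inverse_semigroup_inverse_exists[OF inv ef] by blast
  have absorb: "mult e (mult e z) = mult e z" "mult f (mult f z) = mult f z" if "z \<in> S" for z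
    using that e f by (simp_all add: as[symmetric] idem_def)
  have efxef: "mult e (mult f (mult x (mult e f))) = mult e f"
    and xefx: "mult x (mult e (mult f x)) = x"
    using x e f by (simp_all add: is_inverse_def as cl)
  have xefxz: "mult x (mult e (mult f (mult x z))) = mult x z" if "z \<in> S" for z
    using that x e f xefx by (metis as cl)
  define y where "y = mult f (mult x e)"
  have y: "y \<in> S" using x e f by (simp add: y_def cl)
  have "is_inverse mult (mult e f) y"
    using x e f efxef by (simp add: is_inverse_def y_def as cl absorb xefxz)
  then have "y = x" using inverse_semigroup_inverse_unique[OF inv ef y x(1) _ x(2)] by blast
  moreover have "mult y y = y" using x e f by (simp add: y_def as cl xefxz)
  ultimately have "idem mult x" by (simp add: idem_def)
  then show ?thesis
    using inverse_semigroup_inverse_of_idem[OF inv x(1) ef _ x(2)] by simp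
qed

text \<open>Contexts range over the monoid S with an identity adjoined: None plays that identity.\<close>
definition in_context :: "('a \<Rightarrow> 'a \<Rightarrow> 'a) \<Rightarrow> 'a option \<Rightarrow> 'a \<Rightarrow> 'a option \<Rightarrow> 'a" where
  "in_context mult a s b = case_option id mult a (case_option s (mult s) b)"

definition syntactic_idem_equiv :: "'a set \<Rightarrow> ('a \<Rightarrow> 'a \<Rightarrow> 'a) \<Rightarrow> 'a \<Rightarrow> 'a \<Rightarrow> bool" where
  "syntactic_idem_equiv S mult s t \<longleftrightarrow>
     (\<forall>a b. set_option a \<subseteq> S \<longrightarrow> set_option b \<subseteq> S \<longrightarrow>
        (idem mult (in_context mult a s b) \<longleftrightarrow> idem mult (in_context mult a t b)))"

lemma in_context_None [simp]: "in_context mult None s None = s"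
  by (simp add: in_context_def)

lemma in_context_closed:
  "semigroup_on S mult \<Longrightarrow> s \<in> S \<Longrightarrow> set_option a \<subseteq> S \<Longrightarrow> set_option b \<subseteq> S \<Longrightarrow>
    in_context mult a s b \<in> S"
  by (cases a; cases b) (auto simp: in_context_def semigroup_on_closed)

lemma in_context_mult_left:
  "semigroup_on S mult \<Longrightarrow> c \<in> S \<Longrightarrow> s \<in> S \<Longrightarrow> set_option a \<subseteq> S \<Longrightarrow> set_option b \<subseteq> S \<Longrightarrow>
    in_context mult a (mult c s) b = in_context mult (Some (in_context mult a c None)) s b"
  by (cases a; cases b) (auto simp: in_context_def semigroup_on_assoc semigroup_on_closed)

lemma in_context_mult_right:
  "semigroup_on S mult \<Longrightarrow> c \<in> S \<Longrightarrow> s \<in> S \<Longrightarrow> set_option a \<subseteq> S \<Longrightarrow> set_option b \<subseteq> S \<Longrightarrow>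
    in_context mult a (mult s c) b = in_context mult a s (Some (in_context mult None c b))"
  by (cases a; cases b) (auto simp: in_context_def semigroup_on_assoc semigroup_on_closed)

lemma syntactic_idem_equiv_refl: "syntactic_idem_equiv S mult s s"
  by (simp add: syntactic_idem_equiv_def)

lemma syntactic_idem_equiv_sym: "syntactic_idem_equiv S mult s t \<Longrightarrow> syntactic_idem_equiv S mult t s"
  by (simp add: syntactic_idem_equiv_def)

lemma syntactic_idem_equiv_trans:
  "syntactic_idem_equiv S mult s t \<Longrightarrow> syntactic_idem_equiv S mult t u \<Longrightarrow> syntactic_idem_equiv S mult s u"
  by (simp add: syntactic_idem_equiv_def)

lemma syntactic_idem_equiv_idem:
  "syntactic_idem_equiv S mult s t \<Longrightarrow> idem mult s \<Longrightarrow> idem mult t"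
  unfolding syntactic_idem_equiv_def by (metis in_context_None option.set(1) empty_subsetI)

lemma syntactic_idem_equiv_mult_left:
  assumes sg: "semigroup_on S mult" and S: "s \<in> S" "t \<in> S" "c \<in> S"
    and st: "syntactic_idem_equiv S mult s t"
  shows "syntactic_idem_equiv S mult (mult c s) (mult c t)"
  unfolding syntactic_idem_equiv_def
proof (intro allI impI)
  fix a b assume a: "set_option a \<subseteq> S" and b: "set_option b \<subseteq> S"
  have "set_option (Some (in_context mult a c None)) \<subseteq> S"
    using in_context_closed[OF sg S(3) a] by simp
  with st b show "idem mult (in_context mult a (mult c s) b) \<longleftrightarrow> idem mult (in_context mult a (mult c t) b)"
    unfolding syntactic_idem_equiv_def in_context_mult_left[OF sg S(3) _ a b, OF S(1)]
      in_context_mult_left[OF sg S(3) _ a b, OF S(2)] by blast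
qed

lemma syntactic_idem_equiv_mult_right:
  assumes sg: "semigroup_on S mult" and S: "s \<in> S" "t \<in> S" "c \<in> S"
    and st: "syntactic_idem_equiv S mult s t"
  shows "syntactic_idem_equiv S mult (mult s c) (mult t c)"
  unfolding syntactic_idem_equiv_def
proof (intro allI impI)
  fix a b assume a: "set_option a \<subseteq> S" and b: "set_option b \<subseteq> S"
  have "set_option (Some (in_context mult None c b)) \<subseteq> S"
    using in_context_closed[OF sg S(3) _ b] by simp
  with st a show "idem mult (in_context mult a (mult s c) b) \<longleftrightarrow> idem mult (in_context mult a (mult t c) b)"
    unfolding syntactic_idem_equiv_def in_context_mult_right[OF sg S(3) _ a b, OF S(1)]
      in_context_mult_right[OF sg S(3) _ a b, OF S(2)] by blast
qed

lemma greatest_idpure_congruence_syntactic_idem_equiv: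
  assumes sg: "semigroup_on S mult"
  shows "greatest_idpure_congruence S mult {(s, t). s \<in> S \<and> t \<in> S \<and> syntactic_idem_equiv S mult s t}"
    (is "greatest_idpure_congruence S mult ?K")
  unfolding greatest_idpure_congruence_def
proof (intro conjI allI impI)
  have "equiv S ?K"
    by (rule equivI) (auto simp: refl_on_def sym_def trans_def syntactic_idem_equiv_refl
        intro: syntactic_idem_equiv_sym syntactic_idem_equiv_trans)
  then show "congruence_on S mult ?K"
    unfolding congruence_on_def
    by (auto simp: semigroup_on_closed[OF sg]
        intro: syntactic_idem_equiv_mult_left[OF sg] syntactic_idem_equiv_mult_right[OF sg])
  show "idempotent_pure_rel mult ?K"
    unfolding idempotent_pure_rel_def by (auto intro: syntactic_idem_equiv_idem)
next
  fix \<sigma> assume "congruence_on S mult \<sigma> \<and> idempotent_pure_rel mult \<sigma>"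
  then have eq: "equiv S \<sigma>"
    and compat: "\<And>s t u. (s, t) \<in> \<sigma> \<Longrightarrow> u \<in> S \<Longrightarrow>
      (mult u s, mult u t) \<in> \<sigma> \<and> (mult s u, mult t u) \<in> \<sigma>"
    and pure: "\<And>e s. (e, s) \<in> \<sigma> \<Longrightarrow> idem mult e \<Longrightarrow> idem mult s"
    unfolding congruence_on_def idempotent_pure_rel_def by blast+
  have in_context: "(in_context mult a s b, in_context mult a t b) \<in> \<sigma>"
    if "(s, t) \<in> \<sigma>" "set_option a \<subseteq> S" "set_option b \<subseteq> S" for s t a b
    using that compat by (cases a; cases b) (auto simp: in_context_def)
  show "\<sigma> \<subseteq> ?K"
  proof safe
    fix s t assume st: "(s, t) \<in> \<sigma>"
    then show "s \<in> S" "t \<in> S" using eq by (auto simp: equiv_def refl_on_def)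
    have "(t, s) \<in> \<sigma>" using st eq by (auto simp: equiv_def sym_def)
    with st show "syntactic_idem_equiv S mult s t"
      unfolding syntactic_idem_equiv_def by (blast intro: pure in_context)
  qed
qed

lemma syntactic_idem_equiv_square_idem:
  assumes inv: "inverse_semigroup S mult" and s: "s \<in> S"
    and sq: "syntactic_idem_equiv S mult (mult s s) s"
  shows "idem mult s"
proof -
  have sg: "semigroup_on S mult" using inv by (rule inverse_semigroup_semigroup_on)
  note cl = semigroup_on_closed[OF sg] and as = semigroup_on_assoc[OF sg]
  obtain t where t: "t \<in> S" "is_inverse mult s t"
    using inverse_semigroup_inverse_exists[OF inv s] by blast
  have "idem mult (mult (mult t s) (mult s t))"
    using inverse_semigroup_idem_mult[OF inv] is_inverse_idem_mult[OF sg] is_inverse_sym t s cl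
    by metis
  moreover have "mult (mult t s) (mult s t) = in_context mult (Some t) (mult s s) (Some t)"
    using t s by (simp add: in_context_def as cl)
  ultimately have "idem mult (in_context mult (Some t) s (Some t))"
    using sq t(1) unfolding syntactic_idem_equiv_def by simp
  moreover have "in_context mult (Some t) s (Some t) = t"
    using t s by (simp add: in_context_def is_inverse_def as)
  ultimately have "idem mult t" by simp
  with inverse_semigroup_inverse_of_idem[OF inv t(1) s _ t(2)] show ?thesis by simp
qed

lemma quotient_class_some_rep:
  assumes r: "equiv A r" and C: "C \<in> A // r"
  shows "(SOME x. x \<in> C) \<in> A" "C = r `` {SOME x. x \<in> C}"
proof -
  obtain x where x: "x \<in> A" "C = r `` {x}" using C by (rule quotientE)
  define c where "c = (SOME x. x \<in> C)"
  have "x \<in> C" using x equiv_class_self[OF r] by simp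
  then have "c \<in> C" unfolding c_def by (rule someI)
  then have xc: "(x, c) \<in> r" using x(2) by simp
  show "c \<in> A" using xc equiv_type[OF r] by auto
  show "C = r `` {c}" using xc x(2) equiv_class_eq[OF r] by simp
qed

text \<open>W is either the nonempty words or all words over \<Sigma>, whereas the contexts of the
  syntactic congruence are arbitrary words; hence the assumption word_or_empty.\<close>
locale generated_inverse_semigroup =
  fixes S :: "'a set" and mult :: "'a \<Rightarrow> 'a \<Rightarrow> 'a"
    and \<Sigma> :: "'b set" and W :: "'b list set" and ev :: "'b list \<Rightarrow> 'a"
  assumes inverse: "inverse_semigroup S mult"
    and words_over: "w \<in> W \<Longrightarrow> set w \<subseteq> \<Sigma>"
    and word_or_empty: "set x \<subseteq> \<Sigma> \<Longrightarrow> x = [] \<or> x \<in> W"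
    and append_closed: "u \<in> W \<Longrightarrow> v \<in> W \<Longrightarrow> u @ v \<in> W"
    and eval_closed: "u \<in> W \<Longrightarrow> ev u \<in> S"
    and eval_append: "u \<in> W \<Longrightarrow> v \<in> W \<Longrightarrow> ev (u @ v) = mult (ev u) (ev v)"
    and eval_onto: "ev ` W = S"
begin

abbreviation idem_words :: "'b list set" where
  "idem_words \<equiv> idempotent_problem W ev mult"

abbreviation syn_cong :: "('b list \<times> 'b list) set" where
  "syn_cong \<equiv> syn_rel W \<Sigma> idem_words"

abbreviation canon :: "'a \<Rightarrow> 'b list set" where
  "canon \<equiv> canon_map W ev \<Sigma> idem_words"

lemma semigroup: "semigroup_on S mult"
  using inverse by (rule inverse_semigroup_semigroup_on)

lemma context_append_closed:
  assumes "set x \<subseteq> \<Sigma>" "set y \<subseteq> \<Sigma>" "z \<in> W"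
  shows "x @ z @ y \<in> W"
proof -
  have "z @ y \<in> W" using word_or_empty[OF assms(2)] append_closed assms(3) by auto
  then show ?thesis using word_or_empty[OF assms(1)] append_closed by auto
qed

lemma context_of_words:
  assumes x: "set x \<subseteq> \<Sigma>" and y: "set y \<subseteq> \<Sigma>"
  obtains a b where "set_option a \<subseteq> S" "set_option b \<subseteq> S"
    "\<And>z. z \<in> W \<Longrightarrow> ev (x @ z @ y) = in_context mult a (ev z) b"
proof
  define a where "a = (if x = [] then None else Some (ev x))"
  define b where "b = (if y = [] then None else Some (ev y))"
  show "set_option a \<subseteq> S" "set_option b \<subseteq> S"
    using word_or_empty[OF x] word_or_empty[OF y] eval_closed by (auto simp: a_def b_def)
  fix z assume z: "z \<in> W"
  have "ev (z @ y) = case_option (ev z) (mult (ev z)) b"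
    using word_or_empty[OF y] z eval_append by (auto simp: b_def)
  moreover have "z @ y \<in> W" using context_append_closed[of "[]", OF _ y z] by simp
  ultimately show "ev (x @ z @ y) = in_context mult a (ev z) b"
    using word_or_empty[OF x] eval_append by (auto simp: a_def in_context_def)
qed

lemma words_of_context:
  assumes a: "set_option a \<subseteq> S" and b: "set_option b \<subseteq> S"
  obtains x y where "set x \<subseteq> \<Sigma>" "set y \<subseteq> \<Sigma>"
    "\<And>z. z \<in> W \<Longrightarrow> ev (x @ z @ y) = in_context mult a (ev z) b"
proof -
  obtain x where x: "set x \<subseteq> \<Sigma>" "\<And>w. w \<in> W \<Longrightarrow> ev (x @ w) = case_option id mult a (ev w)"
  proof (cases a)
    case None
    then show ?thesis using that[of "[]"] by simp
  next
    case (Some c)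
    then obtain x where "x \<in> W" "ev x = c" using a eval_onto by auto
    then show ?thesis using that[of x] Some words_over eval_append by simp
  qed
  obtain y where y: "set y \<subseteq> \<Sigma>" "\<And>w. w \<in> W \<Longrightarrow> ev (w @ y) = case_option (ev w) (mult (ev w)) b"
  proof (cases b)
    case None
    then show ?thesis using that[of "[]"] by simp
  next
    case (Some c)
    then obtain y where "y \<in> W" "ev y = c" using b eval_onto by auto
    then show ?thesis using that[of y] Some words_over eval_append by simp
  qed
  have "ev (x @ z @ y) = in_context mult a (ev z) b" if "z \<in> W" for z
    using x(2)[OF context_append_closed[of "[]", OF _ y(1) that]] y(2)[OF that]
    by (simp add: in_context_def)
  with x(1) y(1) show ?thesis using that by blast
qed

lemma syn_equiv_iff_syntactic_idem_equiv:
  assumes u: "u \<in> W" and v: "v \<in> W"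
  shows "syn_equiv \<Sigma> idem_words u v \<longleftrightarrow> syntactic_idem_equiv S mult (ev u) (ev v)"
proof -
  have idem_words_iff: "x @ z @ y \<in> idem_words \<longleftrightarrow> idem mult (ev (x @ z @ y))"
    if "set x \<subseteq> \<Sigma>" "set y \<subseteq> \<Sigma>" "z \<in> W" for x y z
    using that context_append_closed by (simp add: idempotent_problem_def)
  show ?thesis
    unfolding syn_equiv_def syntactic_idem_equiv_def
  proof (rule iffI; intro allI impI)
    fix a b assume H: "\<forall>x y. set x \<subseteq> \<Sigma> \<longrightarrow> set y \<subseteq> \<Sigma> \<longrightarrow>
        (x @ u @ y \<in> idem_words \<longleftrightarrow> x @ v @ y \<in> idem_words)"
      and a: "set_option a \<subseteq> S" and b: "set_option b \<subseteq> S"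
    obtain x y where x: "set x \<subseteq> \<Sigma>" and y: "set y \<subseteq> \<Sigma>"
      and eval_ctx: "\<And>z. z \<in> W \<Longrightarrow> ev (x @ z @ y) = in_context mult a (ev z) b"
      using words_of_context[OF a b] by blast
    have "x @ u @ y \<in> idem_words \<longleftrightarrow> x @ v @ y \<in> idem_words" using H x y by blast
    then show "idem mult (in_context mult a (ev u) b) \<longleftrightarrow> idem mult (in_context mult a (ev v) b)"
      by (simp add: idem_words_iff[OF x y u] idem_words_iff[OF x y v] eval_ctx[OF u] eval_ctx[OF v])
  next
    fix x y assume H: "\<forall>a b. set_option a \<subseteq> S \<longrightarrow> set_option b \<subseteq> S \<longrightarrow>
        (idem mult (in_context mult a (ev u) b) \<longleftrightarrow> idem mult (in_context mult a (ev v) b))"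
      and x: "set x \<subseteq> \<Sigma>" and y: "set y \<subseteq> \<Sigma>"
    obtain a b where "set_option a \<subseteq> S" "set_option b \<subseteq> S"
      and eval_ctx: "\<And>z. z \<in> W \<Longrightarrow> ev (x @ z @ y) = in_context mult a (ev z) b"
      using context_of_words[OF x y] by blast
    then have "idem mult (in_context mult a (ev u) b) \<longleftrightarrow> idem mult (in_context mult a (ev v) b)"
      using H by blast
    then show "x @ u @ y \<in> idem_words \<longleftrightarrow> x @ v @ y \<in> idem_words"
      by (simp add: idem_words_iff[OF x y u] idem_words_iff[OF x y v] eval_ctx[OF u] eval_ctx[OF v])
  qed
qed

lemma syn_cong_iff:
  "(u, v) \<in> syn_cong \<longleftrightarrow> u \<in> W \<and> v \<in> W \<and> syntactic_idem_equiv S mult (ev u) (ev v)"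
  using syn_equiv_iff_syntactic_idem_equiv by (auto simp: syn_rel_def)

lemma equiv_syn_cong: "equiv W syn_cong"
  by (rule equivI) (auto simp: refl_on_def sym_def trans_def syn_cong_iff syntactic_idem_equiv_refl
      intro: syntactic_idem_equiv_sym syntactic_idem_equiv_trans)

lemma canon_eval: "w \<in> W \<Longrightarrow> canon (ev w) = syn_cong `` {w}"
proof -
  assume w: "w \<in> W"
  have "\<exists>u. u \<in> W \<and> ev u = ev w" using w by blast
  then have "(SOME u. u \<in> W \<and> ev u = ev w) \<in> W \<and> ev (SOME u. u \<in> W \<and> ev u = ev w) = ev w"
    by (rule someI_ex)
  then have "((SOME u. u \<in> W \<and> ev u = ev w), w) \<in> syn_cong"
    using w by (simp add: syn_cong_iff syntactic_idem_equiv_refl)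
  then show ?thesis
    unfolding canon_map_def by (rule equiv_class_eq[OF equiv_syn_cong])
qed

lemma canon_eq_iff:
  assumes "s \<in> S" "t \<in> S"
  shows "canon s = canon t \<longleftrightarrow> syntactic_idem_equiv S mult s t"
proof -
  obtain u v where "u \<in> W" "v \<in> W" "s = ev u" "t = ev v" using assms eval_onto by blast
  then show ?thesis
    using eq_equiv_class_iff[OF equiv_syn_cong] by (simp add: canon_eval syn_cong_iff)
qed

lemma canon_onto: "canon ` S = W // syn_cong"
proof -
  have "canon ` S = (\<lambda>w. syn_cong `` {w}) ` W"
    unfolding eval_onto[symmetric] image_comp by (rule image_cong) (simp_all add: canon_eval)
  then show ?thesis by (auto simp: quotient_def)
qed

lemma canon_some_rep:
  assumes "s \<in> S"
  shows "(SOME u. u \<in> canon s) \<in> W" "canon (ev (SOME u. u \<in> canon s)) = canon s"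
proof -
  have C: "canon s \<in> W // syn_cong" using assms canon_onto by auto
  show "(SOME u. u \<in> canon s) \<in> W" using quotient_class_some_rep(1)[OF equiv_syn_cong C] .
  then show "canon (ev (SOME u. u \<in> canon s)) = canon s"
    using quotient_class_some_rep(2)[OF equiv_syn_cong C] by (simp add: canon_eval)
qed

lemma canon_mult:
  assumes s: "s \<in> S" and t: "t \<in> S"
  shows "canon (mult s t) = syn_mult W \<Sigma> idem_words (canon s) (canon t)"
proof -
  define u where "u = (SOME u. u \<in> canon s)"
  define v where "v = (SOME v. v \<in> canon t)"
  have u: "u \<in> W" "ev u \<in> S" and v: "v \<in> W" "ev v \<in> S"
    using canon_some_rep(1) s t eval_closed unfolding u_def v_def by blast+
  have "syntactic_idem_equiv S mult s (ev u)" "syntactic_idem_equiv S mult t (ev v)"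
    using canon_some_rep(2) s t u v canon_eq_iff unfolding u_def v_def by metis+
  then have "syntactic_idem_equiv S mult (mult s t) (mult (ev u) t)"
    and "syntactic_idem_equiv S mult (mult (ev u) t) (mult (ev u) (ev v))"
    using syntactic_idem_equiv_mult_left[OF semigroup] syntactic_idem_equiv_mult_right[OF semigroup]
      s t u v by blast+
  then have "syntactic_idem_equiv S mult (mult s t) (mult (ev u) (ev v))"
    by (rule syntactic_idem_equiv_trans)
  then have "canon (mult s t) = canon (ev (u @ v))"
    using s t u v eval_append semigroup_on_closed[OF semigroup] canon_eq_iff by simp
  then show ?thesis
    using u v append_closed by (simp add: canon_eval syn_mult_def u_def v_def)
qed

lemma canon_idempotent_pure:
  assumes s: "s \<in> S" and "syn_mult W \<Sigma> idem_words (canon s) (canon s) = canon s"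
  shows "idem mult s"
proof -
  have "canon (mult s s) = canon s" using assms canon_mult by simp
  then have "syntactic_idem_equiv S mult (mult s s) s"
    using s canon_eq_iff semigroup_on_closed[OF semigroup] by simp
  then show ?thesis using syntactic_idem_equiv_square_idem[OF inverse s] by simp
qed

theorem canonical_morphism: "canonical_morphism_props S mult \<Sigma> W ev"
proof -
  have "{(s, t). s \<in> S \<and> t \<in> S \<and> canon s = canon t} =
      {(s, t). s \<in> S \<and> t \<in> S \<and> syntactic_idem_equiv S mult s t}"
    using canon_eq_iff by auto
  then show ?thesis
    unfolding canonical_morphism_props_def Let_def
  proof (intro conjI ballI impI)
    show "(u, v) \<in> syn_cong" if "u \<in> W" "v \<in> W" "ev u = ev v" for u v
      using that by (simp add: syn_cong_iff syntactic_idem_equiv_refl)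
  qed (simp_all add: canon_eval canon_onto canon_mult canon_idempotent_pure
      greatest_idpure_congruence_syntactic_idem_equiv[OF semigroup])
qed

end

lemma evalw_closed: "semigroup_on S mult \<Longrightarrow> w \<noteq> [] \<Longrightarrow> set w \<subseteq> S \<Longrightarrow> evalw mult w \<in> S"
  by (induction mult w rule: evalw.induct) (auto simp: semigroup_on_closed)

lemma evalw_append:
  "semigroup_on S mult \<Longrightarrow> u \<noteq> [] \<Longrightarrow> v \<noteq> [] \<Longrightarrow> set u \<subseteq> S \<Longrightarrow> set v \<subseteq> S \<Longrightarrow>
    evalw mult (u @ v) = mult (evalw mult u) (evalw mult v)"
proof (induction mult u rule: evalw.induct)
  case (1 mult x)
  then show ?case by (cases v) auto
next
  case (2 mult x y w)
  then show ?case by (simp add: semigroup_on_assoc evalw_closed)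
qed simp

lemma evalm_closed: "semigroup_on S mult \<Longrightarrow> one \<in> S \<Longrightarrow> set w \<subseteq> S \<Longrightarrow> evalm mult one w \<in> S"
  unfolding evalm_def by (induction w) (auto simp: semigroup_on_closed)

lemma evalm_append:
  assumes "semigroup_on S mult" "one \<in> S" "\<forall>x\<in>S. mult one x = x" "set u \<subseteq> S" "set v \<subseteq> S"
  shows "evalm mult one (u @ v) = mult (evalm mult one u) (evalm mult one v)"
  using assms evalm_closed[OF assms(1,2)]
  by (induction u) (auto simp: evalm_def semigroup_on_assoc)

theorem lemma4:
  fixes S :: "'a set" and mult :: "'a \<Rightarrow> 'a \<Rightarrow> 'a" and one :: 'a and \<Sigma> :: "'a set"
  shows "(inverse_semigroup S mult \<and> \<Sigma> \<subseteq> S \<and> S = evalw mult ` words_ne \<Sigma>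
            \<longrightarrow> canonical_morphism_props S mult \<Sigma> (words_ne \<Sigma>) (evalw mult))
       \<and> (inverse_monoid S mult one \<and> \<Sigma> \<subseteq> S \<and> S = evalm mult one ` words \<Sigma>
            \<longrightarrow> canonical_morphism_props S mult \<Sigma> (words \<Sigma>) (evalm mult one))"
proof (intro conjI impI)
  assume "inverse_semigroup S mult \<and> \<Sigma> \<subseteq> S \<and> S = evalw mult ` words_ne \<Sigma>"
  then have inv: "inverse_semigroup S mult" and sub: "\<Sigma> \<subseteq> S"
    and onto: "evalw mult ` words_ne \<Sigma> = S" by auto
  note sg = inverse_semigroup_semigroup_on[OF inv]
  interpret generated_inverse_semigroup S mult \<Sigma> "words_ne \<Sigma>" "evalw mult"
    using inv onto sub evalw_closed[OF sg] evalw_append[OF sg]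
    by unfold_locales (auto simp: words_ne_def)
  show "canonical_morphism_props S mult \<Sigma> (words_ne \<Sigma>) (evalw mult)"
    by (rule canonical_morphism)
next
  assume "inverse_monoid S mult one \<and> \<Sigma> \<subseteq> S \<and> S = evalm mult one ` words \<Sigma>"
  then have inv: "inverse_semigroup S mult" and sub: "\<Sigma> \<subseteq> S"
    and onto: "evalm mult one ` words \<Sigma> = S"
    and one: "one \<in> S" "\<forall>x\<in>S. mult one x = x" by (auto simp: inverse_monoid_def)
  note sg = inverse_semigroup_semigroup_on[OF inv]
  interpret generated_inverse_semigroup S mult \<Sigma> "words \<Sigma>" "evalm mult one"
    using inv onto sub evalm_closed[OF sg one(1)] evalm_append[OF sg one]
    by unfold_locales (auto simp: words_def)
  show "canonical_morphism_props S mult \<Sigma> (words \<Sigma>) (evalm mult one)"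
    by (rule canonical_morphism)
qed

end
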